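(* Let $\alpha>0$ be fixed. There is a constant $C>0$ (depending only on $\alpha$) such that the following holds. Let $\mathcal{R}=\{P_1,\dots,P_n\}$ be a set of $n$ pairwise disjoint, connected, $\alpha$-fat simple polygons in the plane, let $0<\varepsilon<1$, let $T^*$ be an optimal tour of $\mathcal{R}$ with length $L^*$, let $W_0$ be the axis-aligned bounding box of $T^*$, let $\mathcal{R}_{W_0}\subseteq\mathcal{R}$ be the set of regions lying entirely inside $W_0$, and let $\lambda(\mathcal{R}_{W_0})$ be the sum of the diameters of the regions in $\mathcal{R}_{W_0}$. Then $L^*\ge C\cdot \lambda(\mathcal{R}_{W_0})/\log(n/\varepsilon)$.
   Context: A region $P$ is $\alpha$-fat if $\mathrm{area}(P)\ge \alpha\,[\mathrm{diam}(P)]^2$. A tour of $\mathcal{R}$ is a closed curve in the plane that intersects every region; an optimal tour is one of minimum Euclidean length. *)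

theory Defs
  imports "HOL-Analysis.Analysis"
begin

text \<open>The plane is modelled as the complex numbers (Euclidean metric, Lebesgue measure).\<close>

fun polypath :: "complex list \<Rightarrow> real \<Rightarrow> complex" where
  "polypath [] = linepath 0 0"
| "polypath [a] = linepath a a"
| "polypath [a, b] = linepath a b"
| "polypath (a # b # c # xs) = linepath a b +++ polypath (b # c # xs)"

definition simple_polygon :: "complex set \<Rightarrow> bool" where
  "simple_polygon P \<longleftrightarrow>
     (\<exists>vs. length vs \<ge> 3 \<and> simple_path (polypath (vs @ [hd vs])) \<and>
        P = path_image (polypath (vs @ [hd vs])) \<union> inside (path_image (polypath (vs @ [hd vs]))))"

definition fat :: "real \<Rightarrow> complex set \<Rightarrow> bool" where
  "fat \<alpha> P \<longleftrightarrow> measure lebesgue P \<ge> \<alpha> * (diameter P)\<^sup>2"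

definition curve_length :: "(real \<Rightarrow> complex) \<Rightarrow> ereal" where
  "curve_length g = (SUP ts \<in> {ts. sorted ts \<and> set ts \<subseteq> {0..1}}.
      ereal (\<Sum>i < length ts - 1. dist (g (ts ! i)) (g (ts ! Suc i))))"

definition is_tour :: "complex set set \<Rightarrow> (real \<Rightarrow> complex) \<Rightarrow> bool" where
  "is_tour R g \<longleftrightarrow> path g \<and> pathfinish g = pathstart g \<and> (\<forall>P\<in>R. path_image g \<inter> P \<noteq> {})"

definition optimal_tour :: "complex set set \<Rightarrow> (real \<Rightarrow> complex) \<Rightarrow> bool" where
  "optimal_tour R g \<longleftrightarrow> is_tour R g \<and> (\<forall>h. is_tour R h \<longrightarrow> curve_length g \<le> curve_length h)"

definition bbox :: "complex set \<Rightarrow> complex set" where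
  "bbox S = cbox (Complex (Inf (Re ` S)) (Inf (Im ` S))) (Complex (Sup (Re ` S)) (Sup (Im ` S)))"

end

theory Submission
  imports Defs
begin

text \<open>
  Let L be the length of the optimal tour T; it is finite because a polygonal tour through one
  point of each region competes with T. Every region inside the bounding box of T meets T and has
  diameter at most 2L. Group these regions by diameter into dyadic classes (L/2^k, 2L/2^k].
  A maximal (L/2^k)-separated set of points on T has at most 2^k + 1 elements, and the squares of
  side 6L/2^k around them cover every region of class k; as the regions are disjoint and
  \<alpha>-fat, their areas show that class k has O(2^k/\<alpha>) members, so its diameters add up to
  at most 144L/\<alpha>. With K = \<lceil>log 2 (n/\<epsilon>)\<rceil> classes, the remaining regions
  have diameter at most 2L/2^K \<le> 2L/n and contribute at most 2L. Hence the total diameter is at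
  most (288/\<alpha> + 2) L log 2 (n/\<epsilon>).
\<close>

section \<open>Length of curves\<close>

lemma curve_length_ge_dist:
  assumes "a \<in> {0..1}" "b \<in> {0..1}"
  shows "ereal (dist (g a) (g b)) \<le> curve_length g"
proof -
  have ordered: "ereal (dist (g x) (g y)) \<le> curve_length g" if "x \<le> y" "x \<in> {0..1}" "y \<in> {0..1}" for x y
  proof -
    have "[x, y] \<in> {ts. sorted ts \<and> set ts \<subseteq> {0..1}}" using that by auto
    then have "ereal (\<Sum>i < length [x, y] - 1. dist (g ([x, y] ! i)) (g ([x, y] ! Suc i))) \<le> curve_length g"
      unfolding curve_length_def by (rule SUP_upper)
    then show ?thesis by simp
  qed
  show ?thesis
  proof (cases "a \<le> b")
    case True
    then show ?thesis using ordered assms by simp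
  next
    case False
    then show ?thesis using ordered[of b a] assms by (simp add: dist_commute)
  qed
qed

lemma curve_length_nonneg: "0 \<le> curve_length g"
proof -
  have "[] \<in> {ts. sorted ts \<and> set ts \<subseteq> {0..1::real}}" by auto
  then have "ereal (\<Sum>i < length ([] :: real list) - 1. dist (g ([] ! i)) (g ([] ! Suc i))) \<le> curve_length g"
    unfolding curve_length_def by (rule SUP_upper)
  then show ?thesis by (simp add: zero_ereal_def)
qed

lemma curve_length_le_lipschitz:
  assumes "K-lipschitz_on {0..1} g"
  shows "curve_length g \<le> ereal K"
  unfolding curve_length_def
proof (rule SUP_least)
  fix ts :: "real list" assume "ts \<in> {ts. sorted ts \<and> set ts \<subseteq> {0..1}}"
  then have sorted: "sorted ts" and ts01: "set ts \<subseteq> {0..1}" by auto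
  have K: "0 \<le> K" using assms by (rule lipschitz_on_nonneg)
  show "ereal (\<Sum>i < length ts - 1. dist (g (ts ! i)) (g (ts ! Suc i))) \<le> ereal K"
  proof (cases ts)
    case Nil then show ?thesis using K by simp
  next
    case (Cons t ts')
    define m where "m = length ts - 1"
    have m: "m < length ts" using Cons by (simp add: m_def)
    have "(\<Sum>i < m. dist (g (ts ! i)) (g (ts ! Suc i))) \<le> (\<Sum>i < m. K * (ts ! Suc i - ts ! i))"
    proof (rule sum_mono)
      fix i assume "i \<in> {..<m}"
      then have i: "Suc i < length ts" by (simp add: m_def)
      then have "ts ! i \<le> ts ! Suc i" using sorted by (simp add: sorted_iff_nth_mono)
      moreover have "{ts ! i, ts ! Suc i} \<subseteq> set ts" using i by (auto intro!: nth_mem)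
      then have "ts ! i \<in> {0..1}" "ts ! Suc i \<in> {0..1}" using ts01 by auto
      ultimately show "dist (g (ts ! i)) (g (ts ! Suc i)) \<le> K * (ts ! Suc i - ts ! i)"
        using lipschitz_onD[OF assms] by (fastforce simp: dist_real_def)
    qed
    also have "\<dots> = K * (ts ! m - ts ! 0)"
      by (simp add: sum_distrib_left[symmetric] sum_lessThan_telescope)
    also have "\<dots> \<le> K"
    proof -
      have "{ts ! m, ts ! 0} \<subseteq> set ts" using m by (auto intro!: nth_mem)
      then have "ts ! m \<in> {0..1}" "ts ! 0 \<in> {0..1}" using ts01 by auto
      then show ?thesis using K by (intro mult_left_le) auto
    qed
    finally show ?thesis by (simp add: m_def)
  qed
qed

lemma lipschitz_on_linepath: "(cmod (b - a))-lipschitz_on U (linepath a b)"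
proof (rule lipschitz_onI)
  fix x y :: real
  have "linepath a b x - linepath a b y = of_real (x - y) * (b - a)"
    by (simp add: linepath_def scaleR_conv_of_real algebra_simps)
  then have "dist (linepath a b x) (linepath a b y) = \<bar>x - y\<bar> * cmod (b - a)"
    by (simp only: dist_norm norm_mult norm_of_real)
  then show "dist (linepath a b x) (linepath a b y) \<le> cmod (b - a) * dist x y"
    by (simp add: dist_real_def)
qed simp

lemma lipschitz_on_joinpaths:
  assumes g: "K-lipschitz_on {0..1} g" and h: "K-lipschitz_on {0..1} h"
    and "pathfinish g = pathstart h"
  shows "(2 * K)-lipschitz_on {0..1} (g +++ h)"
proof -
  have "2-lipschitz_on {0..1/2} (\<lambda>x::real. 2 * x)" "2-lipschitz_on {1/2..1} (\<lambda>x::real. 2 * x - 1)"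
    by (auto intro!: lipschitz_onI simp: dist_real_def abs_if)
  moreover have "(\<lambda>x::real. 2 * x) ` {0..1/2} \<subseteq> {0..1}" "(\<lambda>x::real. 2 * x - 1) ` {1/2..1} \<subseteq> {0..1}"
    by auto
  ultimately have "(K * 2)-lipschitz_on {0..1/2} (\<lambda>x. g (2 * x))"
    and "(K * 2)-lipschitz_on {1/2..1} (\<lambda>x. h (2 * x - 1))"
    using lipschitz_on_compose2 lipschitz_on_subset[OF g] lipschitz_on_subset[OF h] by metis+
  then have "(K * 2)-lipschitz_on {0..1} (\<lambda>x. if x \<le> 1/2 then g (2 * x) else h (2 * x - 1))"
    using assms(3) by (intro lipschitz_on_concat) (auto simp: pathfinish_def pathstart_def)
  then show ?thesis by (simp add: joinpaths_def[abs_def] mult.commute)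
qed

section \<open>Polygonal tours\<close>

lemma pathstart_polypath: "xs \<noteq> [] \<Longrightarrow> pathstart (polypath xs) = hd xs"
  by (induction xs rule: polypath.induct) auto

lemma pathfinish_polypath: "xs \<noteq> [] \<Longrightarrow> pathfinish (polypath xs) = last xs"
  by (induction xs rule: polypath.induct) auto

lemma path_polypath: "path (polypath xs)"
  by (induction xs rule: polypath.induct) (auto simp: pathstart_polypath path_const)

lemma set_subset_path_image_polypath: "set xs \<subseteq> path_image (polypath xs)"
  by (induction xs rule: polypath.induct)
    (auto simp: path_image_join pathstart_polypath)

lemma ex_lipschitz_on_polypath: "\<exists>K. K-lipschitz_on {0..1} (polypath xs)"
proof (induction xs rule: polypath.induct)
  case (4 a b c xs)
  then obtain K where K: "K-lipschitz_on {0..1} (polypath (b # c # xs))" by blast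
  define M where "M = max K (cmod (b - a))"
  have "M-lipschitz_on {0..1} (linepath a b)" "M-lipschitz_on {0..1} (polypath (b # c # xs))"
    using lipschitz_on_le[OF lipschitz_on_linepath[of b a]] lipschitz_on_le[OF K] by (auto simp: M_def)
  then have "(2 * M)-lipschitz_on {0..1} (polypath (a # b # c # xs))"
    by (auto intro: lipschitz_on_joinpaths simp: pathstart_polypath)
  then show ?case by blast
qed (auto intro: lipschitz_on_constant lipschitz_on_linepath)

lemma optimal_tour_length_finite:
  assumes "finite R" "optimal_tour R T"
  obtains L where "curve_length T = ereal L" "0 \<le> L"
proof -
  obtain x where x: "\<And>P. P \<in> R \<Longrightarrow> x P \<in> P"
    using assms(2) by (metis optimal_tour_def is_tour_def disjoint_iff)
  obtain xs where xs: "set xs = x ` R" using finite_list assms(1) by (metis finite_imageI)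
  define tour where "tour = polypath (0 # xs @ [0])"
  have "is_tour R tour"
    using x xs set_subset_path_image_polypath[of "0 # xs @ [0]"]
    by (fastforce simp: is_tour_def tour_def path_polypath pathstart_polypath pathfinish_polypath)
  then have "curve_length T \<le> curve_length tour"
    using assms(2) by (simp add: optimal_tour_def)
  moreover obtain K where "curve_length tour \<le> ereal K"
    using ex_lipschitz_on_polypath curve_length_le_lipschitz unfolding tour_def by blast
  ultimately have "curve_length T \<noteq> \<infinity>" by auto
  then show ?thesis
    using curve_length_nonneg[of T] that by (cases "curve_length T") auto
qed

lemma optimal_tour_length_zero:
  assumes "finite R" "card R \<le> 1" "optimal_tour R T"
  shows "curve_length T = 0"
proof -
  obtain x where x: "\<forall>P\<in>R. x \<in> P"
  proof (cases "R = {}")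
    case False
    with assms(1,2) have "card R = 1" by (simp add: le_antisym Suc_leI card_gt_0_iff)
    then obtain P where "R = {P}" by (rule card_1_singletonE)
    with assms(3) show ?thesis using that by (force simp: optimal_tour_def is_tour_def)
  qed auto
  have "is_tour R (\<lambda>t. x)"
    using x by (auto simp: is_tour_def pathstart_def pathfinish_def path_image_def path_const)
  then have "curve_length T \<le> curve_length (\<lambda>t. x)"
    using assms(3) by (simp add: optimal_tour_def)
  also have "\<dots> \<le> 0"
    using curve_length_le_lipschitz[OF lipschitz_on_constant] by (simp add: zero_ereal_def)
  finally show ?thesis using curve_length_nonneg[of T] by simp
qed

section \<open>Packing regions along a curve\<close>

definition separated :: "real \<Rightarrow> 'a::metric_space set \<Rightarrow> bool" where
  "separated D F \<longleftrightarrow> (\<forall>x\<in>F. \<forall>y\<in>F. x \<noteq> y \<longrightarrow> D \<le> dist x y)"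

lemma card_separated_on_curve:
  assumes "finite F" "F \<subseteq> path_image g" "0 \<le> D" "separated D F"
    and L: "curve_length g = ereal L"
  shows "real (card F) * D \<le> L + D"
proof (cases "F = {}")
  case True
  then show ?thesis using curve_length_nonneg[of g] L assms(3) by simp
next
  case False
  have "\<forall>x\<in>F. \<exists>s\<in>{0..1}. g s = x" using assms(2) by (auto simp: path_image_def)
  then obtain t where t: "\<And>x. x \<in> F \<Longrightarrow> t x \<in> {0..1} \<and> g (t x) = x" by metis
  define ts where "ts = sorted_list_of_set (t ` F)"
  have ts: "set ts = t ` F" "sorted ts" "distinct ts" using assms(1) by (auto simp: ts_def)
  have "inj_on t F" by (metis inj_onI t)
  then have len: "length ts = card F" using distinct_card[OF ts(3)] ts(1) card_image by metis
  have "(\<Sum>i < length ts - 1. D) \<le> (\<Sum>i < length ts - 1. dist (g (ts ! i)) (g (ts ! Suc i)))"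
  proof (rule sum_mono)
    fix i assume "i \<in> {..<length ts - 1}"
    then have i: "Suc i < length ts" by auto
    then have "ts ! i \<in> t ` F" "ts ! Suc i \<in> t ` F"
      using ts(1) nth_mem[of i ts] nth_mem[of "Suc i" ts] by auto
    then obtain x y where xy: "x \<in> F" "y \<in> F" "ts ! i = t x" "ts ! Suc i = t y" by blast
    have "ts ! i \<noteq> ts ! Suc i" using ts(3) i by (simp add: nth_eq_iff_index_eq)
    then show "D \<le> dist (g (ts ! i)) (g (ts ! Suc i))"
      using assms(4) xy t by (auto simp: separated_def)
  qed
  moreover have "ereal (\<Sum>i < length ts - 1. dist (g (ts ! i)) (g (ts ! Suc i))) \<le> curve_length g"
    unfolding curve_length_def by (rule SUP_upper) (use ts t in auto)
  ultimately have "real (card F - 1) * D \<le> L" using L len by simp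
  moreover have "card F \<ge> 1" using False assms(1) by (simp add: Suc_leI card_gt_0_iff)
  ultimately show ?thesis by (simp add: of_nat_diff algebra_simps)
qed

lemma curve_net:
  assumes D: "D > 0" and L: "curve_length g = ereal L"
  obtains Q where "finite Q" "Q \<subseteq> path_image g" "real (card Q) * D \<le> L + D"
    "\<And>x. x \<in> path_image g \<Longrightarrow> \<exists>q\<in>Q. dist x q < D"
proof -
  define net where "net F \<longleftrightarrow> finite F \<and> F \<subseteq> path_image g \<and> separated D F" for F
  have card_net: "real (card F) * D \<le> L + D" if "net F" for F
    using card_separated_on_curve[OF _ _ _ _ L] that D by (simp add: net_def)
  have bounded: "\<forall>F. net F \<longrightarrow> card F < nat \<lceil>(L + D) / D\<rceil> + 1"
  proof (intro allI impI)
    fix F assume "net F"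
    then have "real (card F) \<le> (L + D) / D" using card_net D by (simp add: field_simps)
    then have "real (card F) \<le> real (nat \<lceil>(L + D) / D\<rceil>)" by linarith
    then show "card F < nat \<lceil>(L + D) / D\<rceil> + 1" by linarith
  qed
  have "net {}" by (simp add: net_def separated_def)
  then obtain F where F: "net F" and max: "\<And>G. net G \<Longrightarrow> card G \<le> card F"
    using ex_has_greatest_nat[of net "{}" card, OF _ bounded] by blast
  \<comment> \<open>A maximal separated set is a net: any uncovered point could be added to it.\<close>
  have "\<exists>q\<in>F. dist x q < D" if x: "x \<in> path_image g" for x
  proof (rule ccontr)
    assume "\<not> ?thesis"
    then have "x \<notin> F" "net (insert x F)"
      using F x D by (auto simp: net_def separated_def not_less dist_commute)
    then show False using max[of "insert x F"] F by (simp add: net_def)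
  qed
  then show ?thesis using that F card_net by (auto simp: net_def)
qed

lemma measure_cbox_square:
  fixes q :: complex
  assumes "0 \<le> r"
  shows "measure lebesgue (cbox (q - Complex r r) (q + Complex r r)) = 4 * r\<^sup>2"
proof -
  have "q \<in> cbox (q - Complex r r) (q + Complex r r)"
    using assms by (simp add: mem_box Basis_complex_def)
  then show ?thesis
    using assms by (auto simp: content_cbox_if Basis_complex_def power2_eq_square)
qed

lemma card_packing_near_curve:
  assumes L: "curve_length g = ereal L" and D: "0 \<le> D" and S: "finite S" "pairwise disjnt S"
    and P: "\<And>P. P \<in> S \<Longrightarrow> compact P \<and> P \<inter> path_image g \<noteq> {} \<and> diameter P \<le> 2 * D \<and>
              a * D\<^sup>2 \<le> measure lebesgue P"
  shows "real (card S) * a * D \<le> 36 * (L + D)"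
proof (cases "D = 0")
  case True
  then show ?thesis using curve_length_nonneg[of g] L by simp
next
  case False
  then have D: "D > 0" using D by simp
  obtain Q where Q: "finite Q" "Q \<subseteq> path_image g" "real (card Q) * D \<le> L + D"
      "\<And>x. x \<in> path_image g \<Longrightarrow> \<exists>q\<in>Q. dist x q < D"
    using curve_net[OF D L] by blast
  define B where "B q = cbox (q - Complex (3*D) (3*D)) (q + Complex (3*D) (3*D))" for q
  have cover: "\<Union>S \<subseteq> \<Union>(B ` Q)"
  proof
    fix x assume "x \<in> \<Union>S"
    then obtain P p where "P \<in> S" "x \<in> P" "p \<in> P" "p \<in> path_image g" using P by blast
    moreover obtain q where "q \<in> Q" "dist p q < D" using Q(4) \<open>p \<in> path_image g\<close> by blast
    ultimately have "q \<in> Q" "cmod (x - q) \<le> 3 * D"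
      using P diameter_bounded_bound[of P x p] dist_triangle[of x q p]
      by (force simp: dist_norm compact_imp_bounded)+
    then have "x \<in> B q"
      using abs_Re_le_cmod[of "x - q"] abs_Im_le_cmod[of "x - q"]
      by (auto simp: B_def mem_box Basis_complex_def)
    then show "x \<in> \<Union>(B ` Q)" using \<open>q \<in> Q\<close> by blast
  qed
  have lmeas: "P \<in> lmeasurable" if "P \<in> S" for P
    using P[OF that] by (simp add: lmeasurable_compact)
  have "measure lebesgue (\<Union>P\<in>S. id P) = (\<Sum>P\<in>S. measure lebesgue (id P))"
  proof (rule measure_finite_Union)
    show "id ` S \<subseteq> sets lebesgue" using lmeas by (auto simp: fmeasurable_def)
    show "disjoint_family_on id S" using S(2) by (auto simp: disjoint_family_on_def pairwise_def disjnt_def)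
    show "emeasure lebesgue (id P) \<noteq> \<infinity>" if "P \<in> S" for P
      using lmeas[OF that] by (auto simp: fmeasurable_def)
  qed (use S in auto)
  then have union: "measure lebesgue (\<Union>S) = (\<Sum>P\<in>S. measure lebesgue P)" by simp
  have "real (card S) * a * D\<^sup>2 = (\<Sum>P\<in>S. a * D\<^sup>2)" by simp
  also have "\<dots> \<le> (\<Sum>P\<in>S. measure lebesgue P)" using P by (intro sum_mono) auto
  also have "\<dots> = measure lebesgue (\<Union>S)" using union by simp
  also have "\<dots> \<le> measure lebesgue (\<Union>(B ` Q))"
  proof (rule measure_mono_fmeasurable[OF cover])
    show "\<Union>S \<in> sets lebesgue" using S(1) lmeas by (intro sets.finite_Union) (auto simp: fmeasurable_def)
    show "\<Union>(B ` Q) \<in> lmeasurable"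
      using Q(1) by (intro bounded_set_imp_lmeasurable) (auto simp: B_def intro!: sets.finite_UN)
  qed
  also have "\<dots> \<le> (\<Sum>q\<in>Q. measure lebesgue (B q))"
    using Q(1) by (intro measure_UNION_le) (auto simp: B_def)
  also have "\<dots> = real (card Q) * (36 * D\<^sup>2)"
    using D measure_cbox_square[of "3 * D"] by (simp add: B_def power_mult_distrib)
  finally have "real (card S) * a * D \<le> real (card Q) * 36 * D"
    using D by (simp add: power2_eq_square)
  also have "\<dots> \<le> 36 * (L + D)" using Q(3) by simp
  finally show ?thesis .
qed

section \<open>Dyadic decomposition of the diameters\<close>

lemma sum_dyadic_split:
  fixes d :: "'a \<Rightarrow> real"
  assumes "finite S" "0 \<le> c" "\<And>x. x \<in> S \<Longrightarrow> d x \<le> c"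
  shows "sum d S = sum d {x\<in>S. d x \<le> c / 2^K} + (\<Sum>k<K. sum d {x\<in>S. c / 2^Suc k < d x \<and> d x \<le> c / 2^k})"
proof (induction K)
  case 0
  have "{x\<in>S. d x \<le> c / 2^0} = S" using assms(3) by auto
  then show ?case by simp
next
  case (Suc K)
  have "c / 2^Suc K \<le> c / 2^K" using assms(2) by (simp add: divide_left_mono)
  then have "{x\<in>S. d x \<le> c / 2^K} =
      {x\<in>S. d x \<le> c / 2^Suc K} \<union> {x\<in>S. c / 2^Suc K < d x \<and> d x \<le> c / 2^K}"
    by auto
  then have "sum d {x\<in>S. d x \<le> c / 2^K} =
      sum d {x\<in>S. d x \<le> c / 2^Suc K} + sum d {x\<in>S. c / 2^Suc K < d x \<and> d x \<le> c / 2^K}"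
    using assms(1) by (simp add: sum.union_disjoint[symmetric] disjoint_iff)
  then show ?case using Suc.IH by simp
qed

lemma sum_diameter_dyadic_class_le:
  assumes L: "curve_length g = ereal L" and "a > 0" "0 \<le> D" "finite S" "pairwise disjnt S"
    and P: "\<And>P. P \<in> S \<Longrightarrow> compact P \<and> fat a P \<and> P \<inter> path_image g \<noteq> {}"
  shows "(\<Sum>P\<in>{P\<in>S. D < diameter P \<and> diameter P \<le> 2 * D}. diameter P) \<le> 72 * (L + D) / a"
proof -
  let ?C = "{P\<in>S. D < diameter P \<and> diameter P \<le> 2 * D}"
  have "a * D\<^sup>2 \<le> measure lebesgue P" if "P \<in> ?C" for P
  proof -
    have "a * D\<^sup>2 \<le> a * (diameter P)\<^sup>2"
      using that assms(2,3) by (intro mult_left_mono power_mono) auto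
    moreover have "a * (diameter P)\<^sup>2 \<le> measure lebesgue P"
      using that P by (auto simp: fat_def)
    ultimately show ?thesis by linarith
  qed
  then have packing: "real (card ?C) * a * D \<le> 36 * (L + D)"
    using assms P by (intro card_packing_near_curve[OF L]) (auto intro: pairwise_subset)
  have "(\<Sum>P\<in>?C. diameter P) \<le> real (card ?C) * (2 * D)"
    by (rule sum_bounded_above) auto
  then have "a * (\<Sum>P\<in>?C. diameter P) \<le> a * (real (card ?C) * (2 * D))"
    using assms(2) by (intro mult_left_mono) auto
  also have "\<dots> = 2 * (real (card ?C) * a * D)" by simp
  also have "\<dots> \<le> 72 * (L + D)" using packing by simp
  finally show ?thesis using assms(2) by (simp add: pos_le_divide_eq mult.commute)
qed

lemma sum_diameter_le_dyadic:
  assumes "a > 0" and L: "curve_length g = ereal L" and "finite S" "pairwise disjnt S"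
    and P: "\<And>P. P \<in> S \<Longrightarrow> compact P \<and> fat a P \<and> P \<inter> path_image g \<noteq> {} \<and> diameter P \<le> 2 * L"
  shows "(\<Sum>P\<in>S. diameter P) \<le> real K * (144 * L / a) + real (card S) * (2 * L / 2^K)"
proof -
  have L0: "0 \<le> L" using curve_length_nonneg[of g] L by simp
  have small: "(\<Sum>P\<in>{P\<in>S. diameter P \<le> 2 * L / 2^K}. diameter P) \<le> real (card S) * (2 * L / 2^K)"
  proof -
    have "(\<Sum>P\<in>{P\<in>S. diameter P \<le> 2 * L / 2^K}. diameter P)
        \<le> real (card {P\<in>S. diameter P \<le> 2 * L / 2^K}) * (2 * L / 2^K)"
      by (rule sum_bounded_above) auto
    also have "\<dots> \<le> real (card S) * (2 * L / 2^K)"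
      using L0 assms(3) by (intro mult_right_mono) (auto intro!: card_mono)
    finally show ?thesis .
  qed
  have "(\<Sum>P\<in>{P\<in>S. 2 * L / 2^Suc k < diameter P \<and> diameter P \<le> 2 * L / 2^k}. diameter P) \<le> 144 * L / a"
    for k
  proof -
    have "(\<Sum>P\<in>{P\<in>S. L / 2^k < diameter P \<and> diameter P \<le> 2 * (L / 2^k)}. diameter P)
        \<le> 72 * (L + L / 2^k) / a"
      using assms P L0 by (intro sum_diameter_dyadic_class_le[OF L]) auto
    also have "\<dots> \<le> 72 * (L + L) / a"
      using divide_left_mono[of 1 "2^k" L] L0 assms(1) by (intro divide_right_mono) auto
    finally show ?thesis by simp
  qed
  then have "(\<Sum>k<K. \<Sum>P\<in>{P\<in>S. 2 * L / 2^Suc k < diameter P \<and> diameter P \<le> 2 * L / 2^k}. diameter P)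
      \<le> (\<Sum>k<K. 144 * L / a)"
    by (intro sum_mono)
  then have "(\<Sum>k<K. \<Sum>P\<in>{P\<in>S. 2 * L / 2^Suc k < diameter P \<and> diameter P \<le> 2 * L / 2^k}. diameter P)
      \<le> real K * (144 * L / a)"
    by simp
  moreover have "(\<Sum>P\<in>S. diameter P) = (\<Sum>P\<in>{P\<in>S. diameter P \<le> 2 * L / 2^K}. diameter P) +
      (\<Sum>k<K. \<Sum>P\<in>{P\<in>S. 2 * L / 2^Suc k < diameter P \<and> diameter P \<le> 2 * L / 2^k}. diameter P)"
    using assms P L0 by (intro sum_dyadic_split) auto
  ultimately show ?thesis using small by linarith
qed

lemma sum_diameter_le_log:
  assumes "a > 0" and L: "curve_length g = ereal L" and "finite S" "pairwise disjnt S"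
    and P: "\<And>P. P \<in> S \<Longrightarrow> compact P \<and> fat a P \<and> P \<inter> path_image g \<noteq> {} \<and> diameter P \<le> 2 * L"
    and "2 \<le> q" "real (card S) \<le> q"
  shows "(\<Sum>P\<in>S. diameter P) \<le> (288 / a + 2) * L * log 2 q"
proof -
  define K where "K = nat \<lceil>log 2 q\<rceil>"
  have L0: "0 \<le> L" using curve_length_nonneg[of g] L by simp
  have log: "1 \<le> log 2 q" using assms(6) by simp
  have "q = 2 powr log 2 q" using assms(6) by simp
  also have "\<dots> \<le> 2 ^ K" unfolding K_def by (subst powr_realpow[symmetric]) (auto intro: powr_mono simp: real_nat_ceiling_ge)
  finally have "real (card S) \<le> 2 ^ K" using assms(7) by linarith
  then have "real (card S) * (2 * L / 2^K) \<le> 2 ^ K * (2 * L / 2^K)"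
    by (rule mult_right_mono) (use L0 in auto)
  then have "real (card S) * (2 * L / 2^K) \<le> 2 * L" by simp
  moreover have "real K * (144 * L / a) \<le> 2 * log 2 q * (144 * L / a)"
  proof -
    have "real K = of_int \<lceil>log 2 q\<rceil>" using log by (simp add: K_def)
    then have "real K \<le> 2 * log 2 q" using log of_int_ceiling_le_add_one[of "log 2 q"] by linarith
    then show ?thesis using L0 assms(1) by (intro mult_right_mono) auto
  qed
  moreover have "2 * L \<le> 2 * L * log 2 q" using log L0 by (simp add: mult_le_cancel_left1)
  ultimately have "(\<Sum>P\<in>S. diameter P) \<le> 2 * log 2 q * (144 * L / a) + 2 * L * log 2 q"
    using sum_diameter_le_dyadic[OF assms(1-5), of K] by linarith
  also have "\<dots> = (288 / a + 2) * L * log 2 q" using assms(1) by (simp add: field_simps)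
  finally show ?thesis .
qed

section \<open>Regions in the bounding box of a tour\<close>

lemma compact_simple_polygon: "simple_polygon P \<Longrightarrow> compact P"
  unfolding simple_polygon_def compact_eq_bounded_closed
  by (metis bounded_Un bounded_inside bounded_simple_path_image closed_path_image_Un_inside simple_path_imp_path)

lemma diameter_path_image_le:
  assumes "curve_length g = ereal L"
  shows "diameter (path_image g) \<le> L"
proof (rule diameter_le)
  show "path_image g \<noteq> {} \<or> 0 \<le> L" by (simp add: path_image_def)
  fix x y assume "x \<in> path_image g" "y \<in> path_image g"
  then obtain s t where "s \<in> {0..1}" "t \<in> {0..1}" "x = g s" "y = g t"
    unfolding path_image_def by blast
  then show "norm (x - y) \<le> L"
    using curve_length_ge_dist[of s t g] assms by (simp add: dist_norm)
qed

lemma Sup_minus_Inf_le: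
  fixes f :: "'a \<Rightarrow> real"
  assumes "S \<noteq> {}" "\<And>a b. a \<in> S \<Longrightarrow> b \<in> S \<Longrightarrow> f a - f b \<le> \<delta>"
  shows "Sup (f ` S) - Inf (f ` S) \<le> \<delta>"
proof -
  have "f a - \<delta> \<le> Inf (f ` S)" if "a \<in> S" for a
    using assms that by (intro cInf_greatest) force+
  then have "Sup (f ` S) \<le> Inf (f ` S) + \<delta>"
    using assms(1) by (intro cSup_least) force+
  then show ?thesis by simp
qed

lemma diameter_bbox_le:
  assumes "bounded S" "S \<noteq> {}"
  shows "diameter (bbox S) \<le> 2 * diameter S"
proof (rule diameter_le)
  have "dist a b \<le> diameter S" if "a \<in> S" "b \<in> S" for a b
    using assms(1) that by (rule diameter_bounded_bound)
  then have "Sup (Re ` S) - Inf (Re ` S) \<le> diameter S" "Sup (Im ` S) - Inf (Im ` S) \<le> diameter S"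
    using assms(2) abs_Re_le_cmod abs_Im_le_cmod
    by (auto intro!: Sup_minus_Inf_le simp: dist_norm) (smt (verit) minus_complex.sel)+
  fix x y assume "x \<in> bbox S" "y \<in> bbox S"
  then have "\<bar>Re (x - y)\<bar> \<le> diameter S" "\<bar>Im (x - y)\<bar> \<le> diameter S"
    using \<open>Sup (Re ` S) - Inf (Re ` S) \<le> diameter S\<close> \<open>Sup (Im ` S) - Inf (Im ` S) \<le> diameter S\<close>
    by (auto simp: bbox_def mem_box Basis_complex_def)
  then show "norm (x - y) \<le> 2 * diameter S" using cmod_le[of "x - y"] by simp
qed (use assms diameter_ge_0 in auto)

lemma diameter_le_of_subset_bbox:
  assumes "path g" "curve_length g = ereal L" "P \<subseteq> bbox (path_image g)"
  shows "diameter P \<le> 2 * L"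
proof -
  have "diameter P \<le> diameter (bbox (path_image g))"
    using assms(3) by (intro diameter_subset) (auto simp: bbox_def)
  also have "\<dots> \<le> 2 * diameter (path_image g)"
    using bounded_path_image[OF assms(1)] by (intro diameter_bbox_le) (auto simp: path_image_def)
  also have "\<dots> \<le> 2 * L" using diameter_path_image_le[OF assms(2)] by simp
  finally show ?thesis .
qed

lemma optimal_tour_sum_diameter_le:
  assumes "a > 0" "finite R" "pairwise disjnt R" "\<And>P. P \<in> R \<Longrightarrow> simple_polygon P \<and> fat a P"
    and "0 < \<epsilon>" "\<epsilon> < 1" and T: "optimal_tour R T" and L: "curve_length T = ereal L"
  shows "(\<Sum>P\<in>{P\<in>R. P \<subseteq> bbox (path_image T)}. diameter P) \<le> (288 / a + 2) * L * log 2 (card R / \<epsilon>)"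
proof -
  define S where "S = {P\<in>R. P \<subseteq> bbox (path_image T)}"
  have regions: "compact P \<and> fat a P \<and> P \<inter> path_image T \<noteq> {} \<and> diameter P \<le> 2 * L"
    if "P \<in> S" for P
    using that assms(4) T diameter_le_of_subset_bbox[OF _ L] compact_simple_polygon
    by (auto simp: S_def optimal_tour_def is_tour_def)
  show ?thesis
  proof (cases "card R \<le> 1")
    case True
    then have "L = 0" using optimal_tour_length_zero[OF assms(2) _ T] L by (simp add: zero_ereal_def)
    then show ?thesis using regions sum_nonpos[of S diameter] by (force simp: S_def)
  next
    case False
    have "card S \<le> card R" using assms(2) by (auto simp: S_def intro!: card_mono)
    moreover have "\<epsilon> * real (card S) \<le> real (card S)" using assms(5,6) by (simp add: mult_left_le_one_le)
    ultimately have "2 \<le> real (card R) / \<epsilon>" "real (card S) \<le> real (card R) / \<epsilon>"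
      using assms(5,6) False by (auto simp: field_simps)
    then show ?thesis
      using sum_diameter_le_log[OF assms(1) L, of S] assms(2,3) regions
      by (auto simp: S_def intro: pairwise_subset)
  qed
qed

lemma divide_ln_le_of_le_log:
  fixes x c L q :: real
  assumes "0 \<le> x" "x \<le> c * L * log 2 q" "0 < c" "0 \<le> L"
  shows "ln 2 / c * x / ln q \<le> L"
proof (cases "0 < ln q")
  case True
  have "ln 2 / c * x \<le> ln 2 / c * (c * L * log 2 q)"
    using assms by (intro mult_left_mono) auto
  also have "\<dots> = L * ln q" using assms(3) by (simp add: log_def)
  finally show ?thesis by (simp only: pos_divide_le_eq[OF True])
next
  case False
  \<comment> \<open>Then log 2 q \<le> 0 forces x = 0; this covers q = 0, where ln 0 = 0.\<close>
  then have "x = 0"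
    using assms mult_nonneg_nonpos[of "c * L" "log 2 q"] by (simp add: log_def divide_nonpos_pos)
  then show ?thesis using assms(4) by simp
qed

theorem lemma2p6:
  fixes \<alpha> :: real
  assumes "\<alpha> > 0"
  shows "\<exists>C>0. \<forall>(R :: complex set set) (\<epsilon> :: real) (T :: real \<Rightarrow> complex).
     finite R \<and> pairwise disjnt R \<and>
     (\<forall>P\<in>R. simple_polygon P \<and> connected P \<and> fat \<alpha> P) \<and>
     0 < \<epsilon> \<and> \<epsilon> < 1 \<and> optimal_tour R T \<longrightarrow>
     real_of_ereal (curve_length T) \<ge>
       C * (\<Sum>P\<in>{P\<in>R. P \<subseteq> bbox (path_image T)}. diameter P) / ln (real (card R) / \<epsilon>)"
proof -
  define c where "c = 288 / \<alpha> + 2"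
  have c: "0 < c" using assms by (simp add: c_def add_pos_pos)
  show ?thesis
  proof (intro exI[of _ "ln 2 / c"] conjI allI impI)
    fix R :: "complex set set" and \<epsilon> :: real and T :: "real \<Rightarrow> complex"
    assume "finite R \<and> pairwise disjnt R \<and> (\<forall>P\<in>R. simple_polygon P \<and> connected P \<and> fat \<alpha> P) \<and>
      0 < \<epsilon> \<and> \<epsilon> < 1 \<and> optimal_tour R T"
    then have R: "finite R" "pairwise disjnt R" "\<And>P. P \<in> R \<Longrightarrow> simple_polygon P \<and> fat \<alpha> P"
      and \<epsilon>: "0 < \<epsilon>" "\<epsilon> < 1" and T: "optimal_tour R T" by auto
    obtain L where L: "curve_length T = ereal L" "0 \<le> L" using optimal_tour_length_finite[OF R(1) T] .
    have "0 \<le> (\<Sum>P\<in>{P\<in>R. P \<subseteq> bbox (path_image T)}. diameter P)"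
      using R(3) by (auto intro!: sum_nonneg diameter_ge_0 compact_imp_bounded compact_simple_polygon)
    then show "ln 2 / c * (\<Sum>P\<in>{P\<in>R. P \<subseteq> bbox (path_image T)}. diameter P) / ln (real (card R) / \<epsilon>)
        \<le> real_of_ereal (curve_length T)"
      using divide_ln_le_of_le_log optimal_tour_sum_diameter_le[OF assms R \<epsilon> T L(1)] c L
      by (simp add: c_def)
  qed (use c in simp)
qed

end
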